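(* Let $k$ be a commutative ring, $A$ a commutative $k$-algebra, and $(A,\mathfrak g_{A/k},\alpha)$ a Lie algebroid. Let $S^\cdot=\bigoplus_{i\ge 0}S^i$ be a graded $\mathfrak g_{A/k}$-algebra which is noetherian, and let $M^\cdot$ be a graded $(S^\cdot,\mathfrak g_{A/k})$-module which is of finite type over $S^\cdot$. Denote by $\bar S^\cdot=(S^\cdot)^{\mathfrak g_{A/k}}$ and $\bar M^\cdot=(M^\cdot)^{\mathfrak g_{A/k}}$ the invariants. (1) Assume that $S^\cdot$ is semi-simple as a $\mathfrak g_{A/k}$-module and that $\bar S^0$ is a noetherian ring. Then $\bar S^\cdot$ is a graded noetherian subring of $S^\cdot$. (2) Assume the hypotheses of (1) and in addition that $M^\cdot$ is semi-simple as a $\mathfrak g_{A/k}$-module. Then $\bar M^\cdot$ is of finite type over $\bar S^\cdot$.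
   Context: $T_{A/k}$ denotes the $A$-module (and $k$-Lie algebra) of $k$-linear derivations of $A$. A Lie algebroid $(A,\mathfrak g_{A/k},\alpha)$ consists of an $A$-module of finite type $\mathfrak g_{A/k}$ with a $k$-bilinear Lie bracket $[\cdot,\cdot]$ and a map $\alpha:\mathfrak g_{A/k}\to T_{A/k}$ which is a homomorphism of Lie algebras and of $A$-modules, such that $[\delta,a\eta]=\alpha(\delta)(a)\eta+a[\delta,\eta]$ for $a\in A$, $\delta,\eta\in\mathfrak g_{A/k}$. A $\mathfrak g_{A/k}$-module is an $A$-module $M$ with a $k$-Lie algebra homomorphism $f:\mathfrak g_{A/k}\to \mathrm{End}_k(M)$ such that $f(a\delta)(m)=af(\delta)(m)$ and $f(\delta)(am)=\alpha(\delta)(a)m+af(\delta)(m)$. A $\mathfrak g_{A/k}$-module is semi-simple if it is a direct sum of simple $\mathfrak g_{A/k}$-modules (equivalently every $\mathfrak g_{A/k}$-submodule is a direct summand). A graded $\mathfrak g_{A/k}$-algebra is a graded commutative $A$-algebra $S^\cdot=\bigoplus_{i\ge0}S^i$ which is a $\mathfrak g_{A/k}$-module via a homomorphism of $A$-modules and Lie algebras $\phi:\mathfrak g_{A/k}\to T_{S^\cdot/k}$ with $\phi(\delta)(S^i)\subset S^i$ for all $\delta,i$. A graded $(S^\cdot,\mathfrak g_{A/k})$-module is a graded $S^\cdot$-module $M^\cdot=\bigoplus_{i\in\mathbb Z}M^i$ which is also a $\mathfrak g_{A/k}$-module with $\delta M^i\subset M^i$ and $\delta(sm)=\delta(s)m+s\,\delta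 m$ for $s\in S^\cdot$, $m\in M^\cdot$, $\delta\in\mathfrak g_{A/k}$. For such a module, $\bar M^\cdot=\{m\in M^\cdot:\delta m=0\ \forall\delta\in\mathfrak g_{A/k}\}$; it is a graded $\bar S^\cdot$-module and $\bar S^\cdot=\bigoplus_i\bar S^i$ is a graded subring of $S^\cdot$. *)

theory Defs
  imports Main
begin

definition ring_hom_t :: "('a::comm_ring_1 \<Rightarrow> 'b::comm_ring_1) \<Rightarrow> bool" where
  "ring_hom_t f \<longleftrightarrow> f 1 = 1 \<and> (\<forall>x y. f (x + y) = f x + f y) \<and> (\<forall>x y. f (x * y) = f x * f y)"

definition module_t :: "('r::comm_ring_1 \<Rightarrow> 'm::ab_group_add \<Rightarrow> 'm) \<Rightarrow> bool" where
  "module_t sc \<longleftrightarrow>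
     (\<forall>a x y. sc a (x + y) = sc a x + sc a y) \<and>
     (\<forall>a b x. sc (a + b) x = sc a x + sc b x) \<and>
     (\<forall>a b x. sc (a * b) x = sc a (sc b x)) \<and>
     (\<forall>x. sc 1 x = x)"

definition fin_gen_over :: "'r set \<Rightarrow> ('r \<Rightarrow> 'm::ab_group_add \<Rightarrow> 'm) \<Rightarrow> 'm set \<Rightarrow> bool" where
  "fin_gen_over R sc N \<longleftrightarrow>
     (\<exists>F. finite F \<and> F \<subseteq> N \<and>
        N = {x. \<exists>c. (\<forall>f\<in>F. c f \<in> R) \<and> x = (\<Sum>f\<in>F. sc (c f) f)})"

definition subring_t :: "'r::comm_ring_1 set \<Rightarrow> bool" where
  "subring_t R \<longleftrightarrow> 0 \<in> R \<and> 1 \<in> R \<and> (\<forall>x\<in>R. - x \<in> R) \<and>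
     (\<forall>x\<in>R. \<forall>y\<in>R. x + y \<in> R \<and> x * y \<in> R)"

definition ideal_in :: "'r::comm_ring_1 set \<Rightarrow> 'r set \<Rightarrow> bool" where
  "ideal_in R I \<longleftrightarrow> I \<subseteq> R \<and> 0 \<in> I \<and> (\<forall>x\<in>I. \<forall>y\<in>I. x + y \<in> I) \<and>
     (\<forall>r\<in>R. \<forall>x\<in>I. r * x \<in> I)"

definition noetherian_on :: "'r::comm_ring_1 set \<Rightarrow> bool" where
  "noetherian_on R \<longleftrightarrow> (\<forall>I. ideal_in R I \<longrightarrow> fin_gen_over R (*) I)"

definition derivations :: "('k::comm_ring_1 \<Rightarrow> 'b::comm_ring_1) \<Rightarrow> ('b \<Rightarrow> 'b) set" where
  "derivations \<iota> = {D. (\<forall>x y. D (x + y) = D x + D y) \<and>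
                       (\<forall>c x. D (\<iota> c * x) = \<iota> c * D x) \<and>
                       (\<forall>x y. D (x * y) = x * D y + y * D x)}"

definition lie_algebroid ::
  "('k::comm_ring_1 \<Rightarrow> 'a::comm_ring_1) \<Rightarrow> ('a \<Rightarrow> 'g::ab_group_add \<Rightarrow> 'g) \<Rightarrow>
   ('g \<Rightarrow> 'g \<Rightarrow> 'g) \<Rightarrow> ('g \<Rightarrow> 'a \<Rightarrow> 'a) \<Rightarrow> bool" where
  "lie_algebroid \<iota> gsc br \<alpha> \<longleftrightarrow>
     ring_hom_t \<iota> \<and> module_t gsc \<and> fin_gen_over UNIV gsc UNIV \<and>
     \<comment> \<open>k-bilinear Lie bracket\<close>
     (\<forall>x y z. br (x + y) z = br x z + br y z) \<and>
     (\<forall>x y z. br x (y + z) = br x y + br x z) \<and>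
     (\<forall>c x y. br (gsc (\<iota> c) x) y = gsc (\<iota> c) (br x y)) \<and>
     (\<forall>c x y. br x (gsc (\<iota> c) y) = gsc (\<iota> c) (br x y)) \<and>
     (\<forall>x. br x x = 0) \<and>
     (\<forall>x y z. br x (br y z) + br y (br z x) + br z (br x y) = 0) \<and>
     \<comment> \<open>anchor: A-linear Lie algebra homomorphism into T_{A/k}\<close>
     (\<forall>d. \<alpha> d \<in> derivations \<iota>) \<and>
     (\<forall>d e x. \<alpha> (d + e) x = \<alpha> d x + \<alpha> e x) \<and>
     (\<forall>a d x. \<alpha> (gsc a d) x = a * \<alpha> d x) \<and>
     (\<forall>d e x. \<alpha> (br d e) x = \<alpha> d (\<alpha> e x) - \<alpha> e (\<alpha> d x)) \<and>
     \<comment> \<open>Leibniz rule\<close>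
     (\<forall>d e a. br d (gsc a e) = gsc (\<alpha> d a) e + gsc a (br d e))"

definition g_module ::
  "('k::comm_ring_1 \<Rightarrow> 'a::comm_ring_1) \<Rightarrow> ('a \<Rightarrow> 'g::ab_group_add \<Rightarrow> 'g) \<Rightarrow>
   ('g \<Rightarrow> 'g \<Rightarrow> 'g) \<Rightarrow> ('g \<Rightarrow> 'a \<Rightarrow> 'a) \<Rightarrow>
   ('a \<Rightarrow> 'm::ab_group_add \<Rightarrow> 'm) \<Rightarrow> ('g \<Rightarrow> 'm \<Rightarrow> 'm) \<Rightarrow> bool" where
  "g_module \<iota> gsc br \<alpha> msc f \<longleftrightarrow>
     module_t msc \<and>
     \<comment> \<open>f takes values in End_k(M)\<close>
     (\<forall>d x y. f d (x + y) = f d x + f d y) \<and>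
     (\<forall>d c x. f d (msc (\<iota> c) x) = msc (\<iota> c) (f d x)) \<and>
     \<comment> \<open>f is a k-Lie algebra homomorphism\<close>
     (\<forall>d e x. f (d + e) x = f d x + f e x) \<and>
     (\<forall>c d x. f (gsc (\<iota> c) d) x = msc (\<iota> c) (f d x)) \<and>
     (\<forall>d e x. f (br d e) x = f d (f e x) - f e (f d x)) \<and>
     \<comment> \<open>compatibilities\<close>
     (\<forall>a d x. f (gsc a d) x = msc a (f d x)) \<and>
     (\<forall>d a x. f d (msc a x) = msc (\<alpha> d a) x + msc a (f d x))"

definition g_submodule ::
  "('a \<Rightarrow> 'm::ab_group_add \<Rightarrow> 'm) \<Rightarrow> ('g \<Rightarrow> 'm \<Rightarrow> 'm) \<Rightarrow> 'm set \<Rightarrow> bool" where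
  "g_submodule msc f N \<longleftrightarrow> 0 \<in> N \<and> (\<forall>x\<in>N. \<forall>y\<in>N. x + y \<in> N) \<and>
     (\<forall>a. \<forall>x\<in>N. msc a x \<in> N) \<and> (\<forall>d. \<forall>x\<in>N. f d x \<in> N)"

definition g_semisimple ::
  "('a \<Rightarrow> 'm::ab_group_add \<Rightarrow> 'm) \<Rightarrow> ('g \<Rightarrow> 'm \<Rightarrow> 'm) \<Rightarrow> bool" where
  "g_semisimple msc f \<longleftrightarrow>
     (\<forall>N. g_submodule msc f N \<longrightarrow>
        (\<exists>N'. g_submodule msc f N' \<and> N \<inter> N' = {0} \<and>
              (\<forall>x. \<exists>y\<in>N. \<exists>z\<in>N'. x = y + z)))"

definition invariants :: "('g \<Rightarrow> 'm::zero \<Rightarrow> 'm) \<Rightarrow> 'm set" where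
  "invariants f = {x. \<forall>d. f d x = 0}"

definition direct_grading :: "('i \<Rightarrow> 'm::ab_group_add set) \<Rightarrow> bool" where
  "direct_grading G \<longleftrightarrow>
     (\<forall>i. 0 \<in> G i \<and> (\<forall>x\<in>G i. \<forall>y\<in>G i. x + y \<in> G i \<and> - x \<in> G i)) \<and>
     (\<forall>x. \<exists>!c. (\<forall>i. c i \<in> G i) \<and> finite {i. c i \<noteq> 0} \<and> x = (\<Sum>i\<in>{i. c i \<noteq> 0}. c i))"

definition graded_algebra :: "('a::comm_ring_1 \<Rightarrow> 's::comm_ring_1) \<Rightarrow> (nat \<Rightarrow> 's set) \<Rightarrow> bool" where
  "graded_algebra j Sg \<longleftrightarrow> ring_hom_t j \<and> direct_grading Sg \<and>
     (\<forall>a i. \<forall>x\<in>Sg i. j a * x \<in> Sg i) \<and>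
     (\<forall>i l. \<forall>x\<in>Sg i. \<forall>y\<in>Sg l. x * y \<in> Sg (i + l))"

definition graded_g_algebra ::
  "('k::comm_ring_1 \<Rightarrow> 'a::comm_ring_1) \<Rightarrow> ('a \<Rightarrow> 'g::ab_group_add \<Rightarrow> 'g) \<Rightarrow>
   ('g \<Rightarrow> 'g \<Rightarrow> 'g) \<Rightarrow> ('g \<Rightarrow> 'a \<Rightarrow> 'a) \<Rightarrow>
   ('a \<Rightarrow> 's::comm_ring_1) \<Rightarrow> (nat \<Rightarrow> 's set) \<Rightarrow> ('g \<Rightarrow> 's \<Rightarrow> 's) \<Rightarrow> bool" where
  "graded_g_algebra \<iota> gsc br \<alpha> j Sg \<phi> \<longleftrightarrow>
     graded_algebra j Sg \<and>
     g_module \<iota> gsc br \<alpha> (\<lambda>a s. j a * s) \<phi> \<and>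
     (\<forall>d. \<phi> d \<in> derivations (j \<circ> \<iota>)) \<and>
     (\<forall>d i. \<forall>x\<in>Sg i. \<phi> d x \<in> Sg i)"

definition graded_S_g_module ::
  "('k::comm_ring_1 \<Rightarrow> 'a::comm_ring_1) \<Rightarrow> ('a \<Rightarrow> 'g::ab_group_add \<Rightarrow> 'g) \<Rightarrow>
   ('g \<Rightarrow> 'g \<Rightarrow> 'g) \<Rightarrow> ('g \<Rightarrow> 'a \<Rightarrow> 'a) \<Rightarrow>
   ('a \<Rightarrow> 's::comm_ring_1) \<Rightarrow> (nat \<Rightarrow> 's set) \<Rightarrow> ('g \<Rightarrow> 's \<Rightarrow> 's) \<Rightarrow>
   ('s \<Rightarrow> 'm::ab_group_add \<Rightarrow> 'm) \<Rightarrow> (int \<Rightarrow> 'm set) \<Rightarrow> ('g \<Rightarrow> 'm \<Rightarrow> 'm) \<Rightarrow> bool" where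
  "graded_S_g_module \<iota> gsc br \<alpha> j Sg \<phi> smul Mg \<rho> \<longleftrightarrow>
     module_t smul \<and> direct_grading Mg \<and>
     (\<forall>i l. \<forall>s\<in>Sg i. \<forall>x\<in>Mg l. smul s x \<in> Mg (int i + l)) \<and>
     g_module \<iota> gsc br \<alpha> (\<lambda>a x. smul (j a) x) \<rho> \<and>
     (\<forall>d i. \<forall>x\<in>Mg i. \<rho> d x \<in> Mg i) \<and>
     (\<forall>d s x. \<rho> d (smul s x) = smul (\<phi> d s) x + smul s (\<rho> d x))"

definition graded_subring :: "(nat \<Rightarrow> 's::comm_ring_1 set) \<Rightarrow> 's set \<Rightarrow> bool" where
  "graded_subring Sg R \<longleftrightarrow> subring_t R \<and>
     (\<forall>x\<in>R. \<exists>c n. (\<forall>i. c i \<in> R \<inter> Sg i) \<and> x = (\<Sum>i\<le>n. c i))"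

end

theory Submission
  imports Defs "HOL.Modules"
begin

text \<open>
  Let \<open>F\<close> be a finite set of invariant elements of \<open>M\<close>. Every invariant element \<open>x\<close> of the
  \<open>S\<close>-span of \<open>F\<close> is already a combination of \<open>F\<close> with invariant coefficients: write
  \<open>x = s f + y\<close> with \<open>y\<close> in the span of the rest of \<open>F\<close> and split \<open>s\<close> along a \<open>g\<close>-stable
  complement \<open>D\<close> of the ideal \<open>K = {u. u f \<in> span (F - {f})}\<close>. The \<open>K\<close>-part is absorbed
  into the span of the rest, and the \<open>D\<close>-part is invariant, because its derivatives lie in
  \<open>K \<inter> D = 0\<close>; induction on \<open>F\<close> finishes. Since \<open>S\<close> is noetherian, an \<open>S\<^sup>g\<close>-submodule \<open>X\<close>
  of invariants of a finitely generated \<open>S\<close>-module lies in the \<open>S\<close>-span of a finite \<open>F \<subseteq> X\<close>,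
  so \<open>F\<close> generates \<open>X\<close> over \<open>S\<^sup>g\<close>. This applies to ideals of \<open>S\<^sup>g\<close> (with \<open>M = S\<close>) and to
  \<open>M\<^sup>g\<close>. The invariant ring is graded since \<open>g\<close> preserves degrees, so the homogeneous
  components of an invariant are invariant.
\<close>

lemma module_t_iff_module: "module_t sc \<longleftrightarrow> module sc"
  unfolding module_t_def module_def by (auto simp: mult.commute)

interpretation self_module: module "(*) :: 'a::comm_ring_1 \<Rightarrow> 'a \<Rightarrow> 'a"
  by unfold_locales (simp_all add: algebra_simps)

definition combinations_over :: "'r set \<Rightarrow> ('r \<Rightarrow> 'm::ab_group_add \<Rightarrow> 'm) \<Rightarrow> 'm set \<Rightarrow> 'm set" where
  "combinations_over R sc F = {x. \<exists>c. (\<forall>f\<in>F. c f \<in> R) \<and> x = (\<Sum>f\<in>F. sc (c f) f)}"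

lemma fin_gen_over_iff_combinations:
  "fin_gen_over R sc N \<longleftrightarrow> (\<exists>F. finite F \<and> F \<subseteq> N \<and> N = combinations_over R sc F)"
  unfolding fin_gen_over_def combinations_over_def ..

lemma combinations_over_insert:
  assumes "finite F" "f \<notin> F" "r \<in> R" "y \<in> combinations_over R sc F"
  shows "sc r f + y \<in> combinations_over R sc (insert f F)"
proof -
  obtain c where c: "\<forall>f\<in>F. c f \<in> R" and y: "y = (\<Sum>f\<in>F. sc (c f) f)"
    using assms(4) unfolding combinations_over_def by blast
  have "(\<Sum>g\<in>F. sc ((c(f := r)) g) g) = y"
    unfolding y using assms(2) by (intro sum.cong) auto
  then have "sc r f + y = (\<Sum>g\<in>insert f F. sc ((c(f := r)) g) g)"
    using assms(1,2) by simp
  then show ?thesis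
    unfolding combinations_over_def using c assms(3) by (intro CollectI exI[of _ "c(f := r)"]) auto
qed

lemma combinations_over_subset:
  assumes "finite F" "F \<subseteq> X" "0 \<in> X" "\<forall>x\<in>X. \<forall>y\<in>X. x + y \<in> X" "\<forall>r\<in>R. \<forall>x\<in>X. sc r x \<in> X"
  shows "combinations_over R sc F \<subseteq> X"
proof
  fix x assume "x \<in> combinations_over R sc F"
  then obtain c where c: "\<forall>f\<in>F. c f \<in> R" and x: "x = (\<Sum>f\<in>F. sc (c f) f)"
    unfolding combinations_over_def by blast
  have "(\<Sum>f\<in>F'. sc (c f) f) \<in> X" if "F' \<subseteq> F" for F'
    using finite_subset[OF that assms(1)] that
    by (induction F' rule: finite_induct) (use assms(2-5) c in auto)
  then show "x \<in> X" unfolding x by blast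
qed

context module
begin

lemma combinations_over_UNIV: "finite F \<Longrightarrow> combinations_over UNIV scale F = span F"
  by (auto simp: span_finite combinations_over_def)

lemma fin_gen_over_UNIV_iff: "fin_gen_over UNIV scale N \<longleftrightarrow> (\<exists>F. finite F \<and> F \<subseteq> N \<and> N = span F)"
  by (simp add: fin_gen_over_iff_combinations combinations_over_UNIV cong: conj_cong)

lemma in_span_finite_subset:
  assumes "x \<in> span X"
  obtains T where "finite T" "T \<subseteq> X" "x \<in> span T"
proof -
  obtain t r where t: "finite t" "t \<subseteq> X" and x: "x = (\<Sum>a\<in>t. r a *s a)"
    using assms unfolding span_explicit by blast
  have "x \<in> span t"
    unfolding x by (rule span_sum, rule span_scale, erule span_base)
  with t that show ?thesis by blast
qed

end

lemma noetherian_on_UNIV_subspace: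
  fixes I :: "'a::comm_ring_1 set"
  assumes "noetherian_on (UNIV :: 'a set)" "self_module.subspace I"
  shows "\<exists>F. finite F \<and> F \<subseteq> I \<and> I = self_module.span F"
proof -
  have "ideal_in UNIV I"
    using assms(2) unfolding ideal_in_def self_module.subspace_def by blast
  then have "fin_gen_over UNIV (*) I"
    using assms(1) unfolding noetherian_on_def by blast
  then show ?thesis
    unfolding self_module.fin_gen_over_UNIV_iff .
qed

context module
begin

lemma coefficient_ideal:
  assumes N: "subspace N"
  shows "self_module.subspace {k. \<exists>x\<in>N. x - k *s g \<in> span G}"
  unfolding self_module.subspace_def
proof (intro conjI ballI allI; clarsimp)
  show "\<exists>x\<in>N. x \<in> span G"
    using subspace_0[OF N] span_zero by blast
next
  fix k l x y assume "x \<in> N" "x - k *s g \<in> span G" "y \<in> N" "y - l *s g \<in> span G"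
  have "(x + y) - (k + l) *s g = (x - k *s g) + (y - l *s g)"
    by (simp add: algebra_simps)
  also have "\<dots> \<in> span G"
    using \<open>x - k *s g \<in> span G\<close> \<open>y - l *s g \<in> span G\<close> by (rule span_add)
  finally show "\<exists>z\<in>N. z - (k + l) *s g \<in> span G"
    using subspace_add[OF N \<open>x \<in> N\<close> \<open>y \<in> N\<close>] by blast
next
  fix c k x assume "x \<in> N" "x - k *s g \<in> span G"
  have "c *s x - (c * k) *s g = c *s (x - k *s g)"
    by (simp add: algebra_simps)
  also have "\<dots> \<in> span G"
    using \<open>x - k *s g \<in> span G\<close> by (rule span_scale)
  finally show "\<exists>z\<in>N. z - (c * k) *s g \<in> span G"
    using subspace_scale[OF N \<open>x \<in> N\<close>] by blast
qed

lemma noetherian_submodule_finitely_generated: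
  assumes noeth: "noetherian_on (UNIV :: 'a set)" and "finite G"
  shows "subspace N \<Longrightarrow> N \<subseteq> span G \<Longrightarrow> \<exists>F. finite F \<and> F \<subseteq> N \<and> N = span F"
  using \<open>finite G\<close>
proof (induction G arbitrary: N)
  case empty
  then have "N = {0}" using subspace_0 by auto
  then show ?case by (intro exI[of _ "{}"]) simp
next
  case (insert g G N)
  define I where "I = {k. \<exists>x\<in>N. x - k *s g \<in> span G}"
  have "self_module.subspace I"
    unfolding I_def by (rule coefficient_ideal[OF insert.prems(1)])
  then obtain FI where FI: "finite FI" "FI \<subseteq> I" "I = self_module.span FI"
    using noetherian_on_UNIV_subspace[OF noeth] by blast
  have "\<forall>t\<in>FI. \<exists>x. x \<in> N \<and> x - t *s g \<in> span G"
    using FI(2) unfolding I_def by blast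
  from bchoice[OF this] obtain lift where lift: "\<forall>t\<in>FI. lift t \<in> N \<and> lift t - t *s g \<in> span G"
    by (rule exE)
  have N_G: "subspace (N \<inter> span G)" "N \<inter> span G \<subseteq> span G"
    using insert.prems(1) by (simp_all add: subspace_inter)
  obtain F' where F': "finite F'" "F' \<subseteq> N \<inter> span G" "N \<inter> span G = span F'"
    using insert.IH[OF N_G] by blast
  define F where "F = lift ` FI \<union> F'"
  have "F \<subseteq> N" unfolding F_def using lift F'(2) by auto
  have "N \<subseteq> span F"
  proof
    fix x assume "x \<in> N"
    then obtain s where s: "x - s *s g \<in> span G"
      using insert.prems(2) span_breakdown_eq by blast
    then have "s \<in> self_module.span FI" using \<open>x \<in> N\<close> FI(3) unfolding I_def by blast
    then obtain c where c: "s = (\<Sum>t\<in>FI. c t * t)"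
      using self_module.span_finite[OF FI(1)] by auto
    define w where "w = (\<Sum>t\<in>FI. c t *s lift t)"
    have "w \<in> span F"
      unfolding w_def F_def by (rule span_sum, rule span_scale, rule span_base) simp
    have "x - w = (x - s *s g) - (\<Sum>t\<in>FI. c t *s (lift t - t *s g))"
      unfolding w_def c by (simp add: scale_sum_left scale_right_diff_distrib sum_subtractf)
    also have "\<dots> \<in> span G"
      by (rule span_diff[OF s], rule span_sum, rule span_scale) (use lift in blast)
    finally have "x - w \<in> span G" .
    moreover have "x - w \<in> N"
      using \<open>x \<in> N\<close> span_minimal[OF \<open>F \<subseteq> N\<close> insert.prems(1)] \<open>w \<in> span F\<close>
      by (intro subspace_diff[OF insert.prems(1)]) auto
    ultimately have "x - w \<in> span F'"
      using F'(3) by blast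
    then have "x - w \<in> span F"
      using span_mono[of F' F] unfolding F_def by blast
    with \<open>w \<in> span F\<close> have "w + (x - w) \<in> span F"
      by (rule span_add)
    then show "x \<in> span F" by simp
  qed
  moreover have "span F \<subseteq> N" using \<open>F \<subseteq> N\<close> insert.prems(1) by (rule span_minimal)
  ultimately have "N = span F" by (rule subset_antisym)
  moreover have "finite F" unfolding F_def using FI(1) F'(1) by simp
  ultimately show ?case using \<open>F \<subseteq> N\<close> by (intro exI[of _ F] conjI)
qed

lemma span_generated_by_finite_subset:
  assumes noeth: "noetherian_on (UNIV :: 'a set)" and "finite G" "X \<subseteq> span G"
  obtains F where "finite F" "F \<subseteq> X" "X \<subseteq> span F"
proof -
  have "span X \<subseteq> span G" using assms(3) subspace_span by (rule span_minimal)
  then have "\<exists>F'. finite F' \<and> F' \<subseteq> span X \<and> span X = span F'"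
    by (rule noetherian_submodule_finitely_generated[OF noeth \<open>finite G\<close> subspace_span])
  then obtain F' where F': "finite F'" "F' \<subseteq> span X" "span X = span F'" by blast
  have "\<forall>f\<in>F'. \<exists>T. finite T \<and> T \<subseteq> X \<and> f \<in> span T"
  proof
    fix f assume "f \<in> F'"
    then have "f \<in> span X" using F'(2) by blast
    then obtain T where "finite T" "T \<subseteq> X" "f \<in> span T" by (rule in_span_finite_subset)
    then show "\<exists>T. finite T \<and> T \<subseteq> X \<and> f \<in> span T" by blast
  qed
  from bchoice[OF this] obtain T where T: "\<forall>f\<in>F'. finite (T f) \<and> T f \<subseteq> X \<and> f \<in> span (T f)"
    by (rule exE)
  define F where "F = \<Union>(T ` F')"
  have "F' \<subseteq> span F"
  proof
    fix f assume "f \<in> F'"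
    then have "f \<in> span (T f)" "T f \<subseteq> F" using T unfolding F_def by auto
    then show "f \<in> span F" using span_mono[of "T f" F] by blast
  qed
  then have "span F' \<subseteq> span F" using subspace_span by (rule span_minimal)
  then have "X \<subseteq> span F" using span_superset[of X] F'(3) by blast
  moreover have "finite F" "F \<subseteq> X" using T F'(1) unfolding F_def by auto
  ultimately show ?thesis using that by blast
qed

end

locale leibniz_action = module smul
  for smul :: "'s::comm_ring_1 \<Rightarrow> 'm::ab_group_add \<Rightarrow> 'm" (infixr \<open>*s\<close> 75) +
  fixes \<phi> :: "'g \<Rightarrow> 's \<Rightarrow> 's" and \<rho> :: "'g \<Rightarrow> 'm \<Rightarrow> 'm"
  assumes additive_action: "additive (\<rho> d)"
    and leibniz: "\<rho> d (s *s x) = \<phi> d s *s x + s *s \<rho> d x"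
begin

lemma action_zero [simp]: "\<rho> d 0 = 0"
  by (rule additive.zero[OF additive_action])

lemma action_add [simp]: "\<rho> d (x + y) = \<rho> d x + \<rho> d y"
  by (rule additive.add[OF additive_action])

lemma action_diff [simp]: "\<rho> d (x - y) = \<rho> d x - \<rho> d y"
  by (rule additive.diff[OF additive_action])

lemma action_scale_invariant: "x \<in> invariants \<rho> \<Longrightarrow> \<rho> d (s *s x) = \<phi> d s *s x"
  using leibniz unfolding invariants_def by simp

lemma action_span_invariants:
  assumes "F \<subseteq> invariants \<rho>" "x \<in> span F"
  shows "\<rho> d x \<in> span F"
  using assms(2)
proof (induction x rule: span_induct_alt)
  case base
  show ?case by (simp add: span_zero)
next
  case (step c x y)
  then have "\<rho> d (c *s x + y) = \<phi> d c *s x + \<rho> d y"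
    using assms(1) action_scale_invariant by auto
  also have "\<dots> \<in> span F"
    using step by (intro span_add span_scale) (auto intro: span_base)
  finally show ?case .
qed

lemma coefficients_g_submodule:
  fixes j :: "'a \<Rightarrow> 's"
  assumes "F \<subseteq> invariants \<rho>" "f \<in> invariants \<rho>"
  shows "g_submodule (\<lambda>a s. j a * s) \<phi> {u. u *s f \<in> span F}"
  unfolding g_submodule_def
proof (intro conjI ballI allI)
  show "0 \<in> {u. u *s f \<in> span F}" by (simp add: span_zero)
next
  fix u v assume "u \<in> {u. u *s f \<in> span F}" "v \<in> {u. u *s f \<in> span F}"
  then show "u + v \<in> {u. u *s f \<in> span F}" by (simp add: scale_left_distrib span_add)
next
  fix a u assume "u \<in> {u. u *s f \<in> span F}"
  then show "j a * u \<in> {u. u *s f \<in> span F}" by (simp add: span_scale flip: scale_scale)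
next
  fix d u assume "u \<in> {u. u *s f \<in> span F}"
  then have "\<rho> d (u *s f) \<in> span F" using assms(1) by (intro action_span_invariants) simp_all
  then show "\<phi> d u \<in> {u. u *s f \<in> span F}" using action_scale_invariant[OF assms(2)] by simp
qed

lemma semisimple_invariant_coefficient:
  fixes j :: "'a \<Rightarrow> 's"
  assumes semi: "g_semisimple (\<lambda>a s. j a * s) \<phi>"
    and F: "F \<subseteq> invariants \<rho>" and f: "f \<in> invariants \<rho>" and x: "x \<in> invariants \<rho>"
    and s: "x - s *s f \<in> span F"
  obtains s' where "s' \<in> invariants \<phi>" "x - s' *s f \<in> span F"
proof -
  define K where "K = {u. u *s f \<in> span F}"
  have K: "g_submodule (\<lambda>a s. j a * s) \<phi> K"
    unfolding K_def using F f by (rule coefficients_g_submodule)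
  obtain D where D: "g_submodule (\<lambda>a s. j a * s) \<phi> D" "K \<inter> D = {0}"
    and decomp: "\<forall>u. \<exists>u1\<in>K. \<exists>u2\<in>D. u = u1 + u2"
    using semi[unfolded g_semisimple_def, rule_format, OF K] by blast
  obtain s1 s2 where s1: "s1 \<in> K" and s2: "s2 \<in> D" and "s = s1 + s2"
    using decomp by blast
  then have x_s2: "x - s2 *s f = (x - s *s f) + s1 *s f"
    by (simp add: scale_left_distrib)
  have "\<phi> d s2 = 0" for d
  proof -
    have "s2 *s f = x - ((x - s *s f) + s1 *s f)"
      using x_s2 by (simp add: algebra_simps)
    then have "\<phi> d s2 *s f = \<rho> d x - (\<rho> d (x - s *s f) + \<rho> d (s1 *s f))"
      by (simp add: action_scale_invariant[OF f, symmetric])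
    also have "\<dots> = - (\<rho> d (x - s *s f) + \<rho> d (s1 *s f))"
      using x unfolding invariants_def by simp
    also have "\<dots> \<in> span F"
      using s s1 F unfolding K_def
      by (intro span_neg span_add action_span_invariants) simp_all
    finally have "\<phi> d s2 \<in> K" unfolding K_def by simp
    moreover have "\<phi> d s2 \<in> D" using D(1) s2 unfolding g_submodule_def by blast
    ultimately show ?thesis using D(2) by blast
  qed
  then have "s2 \<in> invariants \<phi>" unfolding invariants_def by simp
  moreover have "x - s2 *s f \<in> span F"
    unfolding x_s2 using s s1 unfolding K_def by (simp add: span_add)
  ultimately show ?thesis by (rule that)
qed

lemma span_invariants_subset_combinations:
  fixes j :: "'a \<Rightarrow> 's"
  assumes semi: "g_semisimple (\<lambda>a s. j a * s) \<phi>"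
  shows "finite F \<Longrightarrow> F \<subseteq> invariants \<rho> \<Longrightarrow>
    span F \<inter> invariants \<rho> \<subseteq> combinations_over (invariants \<phi>) smul F"
proof (induction F rule: finite_induct)
  case empty
  show ?case unfolding combinations_over_def by auto
next
  case (insert f F)
  show ?case
  proof
    fix x assume "x \<in> span (insert f F) \<inter> invariants \<rho>"
    then have x: "x \<in> invariants \<rho>" and "x \<in> span (insert f F)" by simp_all
    then obtain s where s: "x - s *s f \<in> span F"
      using span_breakdown_eq[THEN iffD1, OF \<open>x \<in> span (insert f F)\<close>] by blast
    have F: "F \<subseteq> invariants \<rho>" and f: "f \<in> invariants \<rho>" using insert.prems by simp_all
    obtain s' where s': "s' \<in> invariants \<phi>" "x - s' *s f \<in> span F"
      by (rule semisimple_invariant_coefficient[OF semi F f x s])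
    have "x - s' *s f \<in> invariants \<rho>"
      using x s'(1) f unfolding invariants_def by (simp add: leibniz)
    with s'(2) have "x - s' *s f \<in> span F \<inter> invariants \<rho>" by simp
    then have "x - s' *s f \<in> combinations_over (invariants \<phi>) smul F"
      using insert.IH[OF F] by blast
    then have "s' *s f + (x - s' *s f) \<in> combinations_over (invariants \<phi>) smul (insert f F)"
      using insert.hyps s'(1) by (intro combinations_over_insert)
    then show "x \<in> combinations_over (invariants \<phi>) smul (insert f F)" by simp
  qed
qed

lemma invariant_submodule_fin_gen:
  fixes j :: "'a \<Rightarrow> 's"
  assumes noeth: "noetherian_on (UNIV :: 's set)"
    and semi: "g_semisimple (\<lambda>a s. j a * s) \<phi>"
    and G: "finite G" "X \<subseteq> span G"
    and X: "X \<subseteq> invariants \<rho>" "0 \<in> X" "\<forall>x\<in>X. \<forall>y\<in>X. x + y \<in> X"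
      "\<forall>r\<in>invariants \<phi>. \<forall>x\<in>X. r *s x \<in> X"
  shows "fin_gen_over (invariants \<phi>) smul X"
proof -
  obtain F where F: "finite F" "F \<subseteq> X" "X \<subseteq> span F"
    using span_generated_by_finite_subset[OF noeth G] .
  have "X \<subseteq> span F \<inter> invariants \<rho>" using F(3) X(1) by blast
  also have "\<dots> \<subseteq> combinations_over (invariants \<phi>) smul F"
    using F(2) X(1) by (intro span_invariants_subset_combinations[OF semi F(1)]) blast
  also have "\<dots> \<subseteq> X"
    using F(1,2) X(2-4) by (rule combinations_over_subset)
  finally have "X = combinations_over (invariants \<phi>) smul F" by blast
  then show ?thesis
    unfolding fin_gen_over_iff_combinations using F(1,2) by blast
qed

lemma invariants_fin_gen:
  fixes j :: "'a \<Rightarrow> 's"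
  assumes noeth: "noetherian_on (UNIV :: 's set)"
    and semi: "g_semisimple (\<lambda>a s. j a * s) \<phi>"
    and fin: "fin_gen_over UNIV smul UNIV"
  shows "fin_gen_over (invariants \<phi>) smul (invariants \<rho>)"
proof -
  obtain G where "finite G" "UNIV = span G"
    using fin unfolding fin_gen_over_UNIV_iff by blast
  then show ?thesis
    by (intro invariant_submodule_fin_gen[OF noeth semi, of G])
       (auto simp: invariants_def leibniz)
qed

end

lemma direct_grading_decomposition_unique:
  assumes "direct_grading G"
    and "\<forall>i. c i \<in> G i" "finite {i. c i \<noteq> 0}" "\<forall>i. c' i \<in> G i" "finite {i. c' i \<noteq> 0}"
    and "(\<Sum>i | c i \<noteq> 0. c i) = (\<Sum>i | c' i \<noteq> 0. c' i)"
  shows "c = c'"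
proof -
  define x where "x = (\<Sum>i | c i \<noteq> 0. c i)"
  have "\<exists>!c. (\<forall>i. c i \<in> G i) \<and> finite {i. c i \<noteq> 0} \<and> x = (\<Sum>i | c i \<noteq> 0. c i)"
    using assms(1) unfolding direct_grading_def by blast
  then obtain c0 where c0: "\<And>y. (\<forall>i. y i \<in> G i) \<and> finite {i. y i \<noteq> 0} \<and> x = (\<Sum>i | y i \<noteq> 0. y i) \<Longrightarrow> y = c0"
    by (elim ex1E) blast
  have "c = c0" by (rule c0) (use assms(2,3) in \<open>simp add: x_def\<close>)
  moreover have "c' = c0" by (rule c0) (use assms(4-6) in \<open>simp add: x_def\<close>)
  ultimately show ?thesis by simp
qed

lemma direct_grading_component_in_kernel:
  fixes G :: "'i \<Rightarrow> 'm::ab_group_add set"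
  assumes grading: "direct_grading G" and D: "additive D" "\<forall>i. \<forall>x\<in>G i. D x \<in> G i"
    and c: "\<forall>i. c i \<in> G i" "finite {i. c i \<noteq> 0}" and kernel: "D (\<Sum>i | c i \<noteq> 0. c i) = 0"
  shows "D (c i) = 0"
proof -
  have sub: "{i. D (c i) \<noteq> 0} \<subseteq> {i. c i \<noteq> 0}" using additive.zero[OF D(1)] by auto
  have "(\<Sum>i | D (c i) \<noteq> 0. D (c i)) = (\<Sum>i | c i \<noteq> 0. D (c i))"
    by (rule sum.mono_neutral_left[OF c(2) sub]) auto
  also have "\<dots> = D (\<Sum>i | c i \<noteq> 0. c i)"
    by (rule additive.sum[OF D(1), symmetric])
  also have "\<dots> = (\<Sum>i | (0::'m) \<noteq> 0. 0)"
    using kernel by simp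
  finally have "(\<lambda>i. D (c i)) = (\<lambda>_. 0)"
    using D(2) c finite_subset[OF sub c(2)] grading unfolding direct_grading_def
    by (intro direct_grading_decomposition_unique[OF grading]) auto
  then show ?thesis by (rule fun_cong)
qed

lemma invariants_graded_subring:
  fixes \<phi> :: "'g \<Rightarrow> 's::comm_ring_1 \<Rightarrow> 's"
  assumes grading: "direct_grading Sg" and additive: "\<And>d. additive (\<phi> d)"
    and homogeneous: "\<And>d. \<forall>i. \<forall>x\<in>Sg i. \<phi> d x \<in> Sg i" and subring: "subring_t (invariants \<phi>)"
  shows "graded_subring Sg (invariants \<phi>)"
  unfolding graded_subring_def
proof (intro conjI ballI subring)
  fix x assume x: "x \<in> invariants \<phi>"
  have "\<exists>!c. (\<forall>i. c i \<in> Sg i) \<and> finite {i. c i \<noteq> 0} \<and> x = (\<Sum>i | c i \<noteq> 0. c i)"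
    using grading unfolding direct_grading_def by blast
  then obtain c where c: "\<forall>i. c i \<in> Sg i" "finite {i. c i \<noteq> 0}" "x = (\<Sum>i | c i \<noteq> 0. c i)"
    by blast
  have "\<phi> d (c i) = 0" for d i
    using x c(3) unfolding invariants_def
    by (intro direct_grading_component_in_kernel[OF grading additive homogeneous c(1,2)]) simp
  then have "\<forall>i. c i \<in> invariants \<phi> \<inter> Sg i" using c(1) unfolding invariants_def by simp
  moreover obtain n where n: "\<forall>i\<in>{i. c i \<noteq> 0}. i \<le> n"
    using c(2) finite_nat_set_iff_bounded_le by blast
  have "x = (\<Sum>i\<le>n. c i)"
    unfolding c(3) by (rule sum.mono_neutral_left) (use n in auto)
  ultimately show "\<exists>c n. (\<forall>i. c i \<in> invariants \<phi> \<inter> Sg i) \<and> x = (\<Sum>i\<le>n. c i)" by blast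
qed

lemma derivation_invariants_subring:
  assumes "\<And>d. \<phi> d \<in> derivations \<iota>"
  shows "subring_t (invariants \<phi>)"
proof -
  have additive: "additive (\<phi> d)" and leibniz: "\<phi> d (x * y) = x * \<phi> d y + y * \<phi> d x" for d x y
    using assms[of d] unfolding derivations_def additive_def by blast+
  have "\<phi> d 1 = 0" for d
    using leibniz[of d 1 1] by simp
  then show ?thesis
    unfolding subring_t_def invariants_def
    by (simp add: additive.zero[OF additive] additive.minus[OF additive] additive.add[OF additive] leibniz)
qed

theorem mainTheorem1:
  fixes \<iota> :: "'k::comm_ring_1 \<Rightarrow> 'a::comm_ring_1"
    and gsc :: "'a \<Rightarrow> 'g::ab_group_add \<Rightarrow> 'g"
    and br :: "'g \<Rightarrow> 'g \<Rightarrow> 'g"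
    and \<alpha> :: "'g \<Rightarrow> 'a \<Rightarrow> 'a"
    and j :: "'a \<Rightarrow> 's::comm_ring_1"
    and Sg :: "nat \<Rightarrow> 's set"
    and \<phi> :: "'g \<Rightarrow> 's \<Rightarrow> 's"
    and smul :: "'s \<Rightarrow> 'm::ab_group_add \<Rightarrow> 'm"
    and Mg :: "int \<Rightarrow> 'm set"
    and \<rho> :: "'g \<Rightarrow> 'm \<Rightarrow> 'm"
  assumes algebroid: "lie_algebroid \<iota> gsc br \<alpha>"
    and S_alg: "graded_g_algebra \<iota> gsc br \<alpha> j Sg \<phi>"
    and S_noeth: "noetherian_on (UNIV :: 's set)"
    and M_mod: "graded_S_g_module \<iota> gsc br \<alpha> j Sg \<phi> smul Mg \<rho>"
    and M_fin: "fin_gen_over UNIV smul UNIV"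
  shows "(g_semisimple (\<lambda>a s. j a * s) \<phi> \<and> noetherian_on (invariants \<phi> \<inter> Sg 0)
            \<longrightarrow> graded_subring Sg (invariants \<phi>) \<and> noetherian_on (invariants \<phi>))
       \<and> (g_semisimple (\<lambda>a s. j a * s) \<phi> \<and> noetherian_on (invariants \<phi> \<inter> Sg 0)
            \<and> g_semisimple (\<lambda>a x. smul (j a) x) \<rho>
            \<longrightarrow> fin_gen_over (invariants \<phi>) smul (invariants \<rho>))"
proof -
  have derivation: "\<phi> d \<in> derivations (j \<circ> \<iota>)" for d
    using S_alg unfolding graded_g_algebra_def by blast
  then have additive_\<phi>: "additive (\<phi> d)" for d
    unfolding derivations_def additive_def by blast
  interpret S: leibniz_action "(*)" \<phi> \<phi>
    using additive_\<phi> derivation unfolding derivations_def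
    by unfold_locales (auto simp: algebra_simps)
  interpret M: leibniz_action smul \<phi> \<rho>
    using M_mod unfolding graded_S_g_module_def g_module_def module_t_iff_module
    by (intro leibniz_action.intro leibniz_action_axioms.intro) (auto simp: additive_def)
  have S_graded: "direct_grading Sg" "\<And>d. \<forall>i. \<forall>x\<in>Sg i. \<phi> d x \<in> Sg i"
    using S_alg unfolding graded_g_algebra_def graded_algebra_def by blast+
  have S_subring: "subring_t (invariants \<phi>)"
    using derivation by (rule derivation_invariants_subring)
  have "noetherian_on (invariants \<phi>)" if semi: "g_semisimple (\<lambda>a s. j a * s) \<phi>"
    unfolding noetherian_on_def
  proof (intro allI impI)
    fix I assume "ideal_in (invariants \<phi>) I"
    then show "fin_gen_over (invariants \<phi>) (*) I"
      unfolding ideal_in_def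
      by (intro S.invariant_submodule_fin_gen[OF S_noeth semi, of "{1}"])
         (auto simp: self_module.span_singleton)
  qed
  then show ?thesis
    using invariants_graded_subring[OF S_graded(1) additive_\<phi> S_graded(2) S_subring]
      M.invariants_fin_gen[OF S_noeth _ M_fin] by blast
qed

end
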